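(* Let $G$ be a topological group whose topology is induced by a left-invariant metric, and let $H$ be a subgroup of $G$. Then $H$ is strictly R-bounded if and only if $H$ is countable.
   Context: For a topological group $H$ with identity $e$, in the R-game in round $n\in\mathbb N$ player ONE chooses a neighborhood $U_n$ of $e$ and TWO a point $x_n\in H$; TWO wins if $H=\bigcup_n x_nU_n$. $H$ is strictly R-bounded if TWO has a winning strategy. *)

theory Defs
  imports "HOL-Analysis.Analysis"
begin

text \<open>The group G is a type of class topological_group_add (the group operation is
written additively but need NOT be commutative), whose topology is that of the metric dist.\<close>

definition is_subgroup :: "'a::group_add set \<Rightarrow> bool" where
  "is_subgroup H \<longleftrightarrow> 0 \<in> H \<and> (\<forall>x\<in>H. \<forall>y\<in>H. x + y \<in> H) \<and> (\<forall>x\<in>H. - x \<in> H)"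

definition nbhd_of_identity_in :: "'a::{topological_space,group_add} set \<Rightarrow> 'a set \<Rightarrow> bool" where
  "nbhd_of_identity_in H U \<longleftrightarrow> U \<subseteq> H \<and> (\<exists>V. open V \<and> 0 \<in> V \<and> V \<inter> H \<subseteq> U)"

text \<open>Strategy of TWO: maps the list [U_0,...,U_n] of ONE's moves so far to x_n \<in> H.
  It is winning if for every play of ONE, H is the union of the translates x_n U_n.\<close>
definition strictly_R_bounded :: "'a::{topological_space,group_add} set \<Rightarrow> bool" where
  "strictly_R_bounded H \<longleftrightarrow>
     (\<exists>\<sigma> :: 'a set list \<Rightarrow> 'a. (\<forall>l. \<sigma> l \<in> H) \<and>
        (\<forall>U :: nat \<Rightarrow> 'a set. (\<forall>n. nbhd_of_identity_in H (U n)) \<longrightarrow>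
            H = (\<Union>n. (\<lambda>u. \<sigma> (map U [0..<Suc n]) + u) ` U n)))"

end

theory Submission
  imports Defs
begin

text \<open>If H is countable, TWO wins by simply enumerating H: in round n she plays the n-th
  element, which lies in its own translate of U_n because 0 \<in> U_n.
  Conversely, let ONE play only the neighbourhoods B_k = ball 0 (1/(k+1)) \<inter> H and view a
  strategy of TWO as a map from finite sequences s of indices to points. A point caught after
  every answer k to a position s lies within 1/(k+1) of TWO's reply, so it is the limit of these
  replies; hence at most one point is caught at each of the countably many positions. A point of
  H caught at no position lets ONE choose, round after round, a ball whose translate misses it,
  and this play defeats the strategy.\<close>

lemma countable_imp_strictly_R_bounded:
  fixes H :: "'a::{topological_space, group_add} set"
  assumes "is_subgroup H" and "countable H"
  shows "strictly_R_bounded H"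
proof -
  have H0: "0 \<in> H" and H_add: "\<And>x y. x \<in> H \<Longrightarrow> y \<in> H \<Longrightarrow> x + y \<in> H"
    using assms(1) unfolding is_subgroup_def by auto
  define \<sigma> where "\<sigma> l = from_nat_into H (length l - 1)" for l :: "'a set list"
  have \<sigma>_in_H: "\<sigma> l \<in> H" for l
    using H0 unfolding \<sigma>_def by (intro from_nat_into) blast
  have \<sigma>_round: "\<sigma> (map U [0..<Suc n]) = from_nat_into H n" for U :: "nat \<Rightarrow> 'a set" and n
    by (simp add: \<sigma>_def)
  have "H = (\<Union>n. (\<lambda>u. \<sigma> (map U [0..<Suc n]) + u) ` U n)"
    if nbhds: "\<forall>n. nbhd_of_identity_in H (U n)" for U :: "nat \<Rightarrow> 'a set"
  proof
    have U_sub: "U n \<subseteq> H" and U0: "0 \<in> U n" for n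
      using nbhds H0 unfolding nbhd_of_identity_in_def by blast+
    show "H \<subseteq> (\<Union>n. (\<lambda>u. \<sigma> (map U [0..<Suc n]) + u) ` U n)"
    proof
      fix h assume "h \<in> H"
      then obtain n where "from_nat_into H n = h"
        using from_nat_into_surj[OF assms(2)] by blast
      then have "h = \<sigma> (map U [0..<Suc n]) + 0"
        using \<sigma>_round[of U n] by simp
      then show "h \<in> (\<Union>n. (\<lambda>u. \<sigma> (map U [0..<Suc n]) + u) ` U n)"
        using U0 by blast
    qed
    show "(\<Union>n. (\<lambda>u. \<sigma> (map U [0..<Suc n]) + u) ` U n) \<subseteq> H"
      using U_sub \<sigma>_in_H H_add by blast
  qed
  then show ?thesis
    unfolding strictly_R_bounded_def using \<sigma>_in_H by blast
qed

lemma nbhd_of_identity_ball_inter: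
  fixes H :: "'a::{metric_space, group_add} set"
  assumes "r > 0"
  shows "nbhd_of_identity_in H (ball 0 r \<inter> H)"
  unfolding nbhd_of_identity_in_def using assms by (intro conjI exI[of _ "ball 0 r"]) auto

lemma LIMSEQ_of_dist_less_inverse_Suc:
  fixes y :: "nat \<Rightarrow> 'a::metric_space"
  assumes "\<And>k. dist (y k) h < 1 / real (Suc k)"
  shows "y \<longlonglongrightarrow> h"
proof (rule tendsto_dist_iff[THEN iffD2], rule Lim_null_comparison)
  show "\<forall>\<^sub>F k in sequentially. norm (dist (y k) h) \<le> inverse (real (Suc k))"
    using assms by (simp add: less_imp_le divide_inverse)
  show "(\<lambda>k. inverse (real (Suc k))) \<longlonglongrightarrow> 0"
    by (rule LIMSEQ_inverse_real_of_nat)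
qed

lemma countable_if_at_most_one_per_index:
  fixes P :: "'i::countable \<Rightarrow> 'a \<Rightarrow> bool"
  assumes "\<And>i x y. P i x \<Longrightarrow> P i y \<Longrightarrow> x = y"
  shows "countable {x. \<exists>i. P i x}"
proof -
  have "{x. \<exists>i. P i x} \<subseteq> range (\<lambda>i. SOME x. P i x)"
    using assms by (blast intro: someI2)
  then show ?thesis
    by (rule countable_subset) simp
qed

lemma play_avoiding_point:
  fixes C :: "nat list \<Rightarrow> nat \<Rightarrow> 'a set"
  assumes "\<And>s. \<exists>k. h \<notin> C s k"
  obtains g :: "nat \<Rightarrow> nat" where "\<And>n. h \<notin> C (map g [0..<n]) (g n)"
proof -
  obtain f where f: "\<And>s. h \<notin> C s (f s)"
    using assms by metis
  define position where "position = rec_nat [] (\<lambda>_ s. s @ [f s])"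
  define g where "g n = f (position n)" for n
  have "map g [0..<n] = position n" for n
    by (induction n) (simp_all add: position_def g_def)
  then show thesis
    using that f by (metis g_def)
qed

lemma strictly_R_bounded_imp_countable:
  fixes H :: "'a::{metric_space, group_add} set"
  assumes left_invariant: "\<And>g x y :: 'a. dist (g + x) (g + y) = dist x y"
    and "strictly_R_bounded H"
  shows "countable H"
proof -
  obtain \<sigma> :: "'a set list \<Rightarrow> 'a" where
    wins: "\<And>U. \<forall>n. nbhd_of_identity_in H (U n) \<Longrightarrow>
            H = (\<Union>n. (\<lambda>u. \<sigma> (map U [0..<Suc n]) + u) ` U n)"
    using assms(2) unfolding strictly_R_bounded_def by blast
  define B where "B k = ball 0 (1 / real (Suc k)) \<inter> H" for k :: nat
  define reply where "reply s k = \<sigma> (map B (s @ [k]))" for s k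
  define C where "C s k = (\<lambda>u. reply s k + u) ` B k" for s k
  have near_reply: "dist (reply s k) h < 1 / real (Suc k)" if "h \<in> C s k" for s k h
    using that left_invariant[of "reply s k" 0] by (auto simp: C_def B_def)
  have "countable {h. \<exists>s. \<forall>k. h \<in> C s k}"
  proof (rule countable_if_at_most_one_per_index)
    fix s h h' assume "\<forall>k. h \<in> C s k" "\<forall>k. h' \<in> C s k"
    then have "reply s \<longlonglongrightarrow> h" "reply s \<longlonglongrightarrow> h'"
      by (blast intro: LIMSEQ_of_dist_less_inverse_Suc near_reply)+
    then show "h = h'"
      by (rule LIMSEQ_unique)
  qed
  moreover have "H \<subseteq> {h. \<exists>s. \<forall>k. h \<in> C s k}"
  proof
    fix h assume "h \<in> H"
    show "h \<in> {h. \<exists>s. \<forall>k. h \<in> C s k}"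
    proof (rule ccontr)
      assume "h \<notin> {h. \<exists>s. \<forall>k. h \<in> C s k}"
      then obtain g where avoid: "\<And>n. h \<notin> C (map g [0..<n]) (g n)"
        using play_avoiding_point[of h C] by blast
      have "\<forall>n. nbhd_of_identity_in H (B (g n))"
        unfolding B_def by (simp add: nbhd_of_identity_ball_inter)
      from wins[OF this] \<open>h \<in> H\<close> obtain n where
        "h \<in> (\<lambda>u. \<sigma> (map (\<lambda>n. B (g n)) [0..<Suc n]) + u) ` B (g n)"
        by blast
      then have "h \<in> C (map g [0..<n]) (g n)"
        by (simp add: C_def reply_def o_def)
      with avoid show False by blast
    qed
  qed
  ultimately show ?thesis
    by (rule countable_subset[rotated])
qed

theorem mainTheorem7:
  fixes H :: "'a::{metric_space, topological_group_add} set"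
  assumes left_invariant: "\<And>g x y :: 'a. dist (g + x) (g + y) = dist x y"
    and "is_subgroup H"
  shows "strictly_R_bounded H \<longleftrightarrow> countable H"
  using strictly_R_bounded_imp_countable[OF left_invariant, of H]
    countable_imp_strictly_R_bounded[OF \<open>is_subgroup H\<close>]
  by blast

end
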